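(* Let $(\Omega,\mathcal F,\mathbb P)$ be a probability space. For each $N\in\mathbb N$ let $\{t_j\}_{j\in\mathbb N}=\{t_j^{(N)}\}_{j\in\mathbb N}$ be a sequence of positive random variables on it (dependence on $N$ suppressed) satisfying: (i) $\mathbb E(t_i)=\frac1N$ for all $i$ and all $N$; (ii) there exist $r>0$ and a constant $\tilde C>0$ such that $\mathbb E(t_i^{2+r})\le \frac{\tilde C}{N^{2+r}}$ for all $i$ and all $N$; (iii) for all $m\in\mathbb N$ (and all $N$), the vector $(t_1,\dots,t_m)$ is negatively superadditive dependent. Let $\tau_N=\sum_{j=1}^N t_j$. Then $\tau_N\to1$ almost surely as $N\to\infty$.
   Context: A function $\phi:\mathbb R^m\to\mathbb R$ is superadditive if $\phi(x\vee y)+\phi(x\wedge y)\ge\phi(x)+\phi(y)$ for all $x,y\in\mathbb R^m$, where $\vee$ and $\wedge$ denote componentwise maximum and minimum. A random vector $(X_1,\dots,X_m)$ is negatively superadditive dependent (NSD) if for every superadditive $\phi$ such that the expectation $\mathbb E\phi(X_1,\dots,X_m)$ exists, $\mathbb E\phi(X_1,\dots,X_m)\le\mathbb E\phi(X_1^*,\dots,X_m^* )$, where $X_1^*,\dots,X_m^*$ are independent and $X_i^*$ has the same distribution as $X_i$ for each $i$. *)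

theory Defs
  imports "HOL-Probability.Probability"
begin

text \<open>Vectors indexed by a finite set I of natural numbers are represented as
  extensional functions nat => real (elements of PiE I UNIV).
  Superadditivity w.r.t. componentwise max/min.\<close>

definition superadditive_on :: "nat set \<Rightarrow> ((nat \<Rightarrow> real) \<Rightarrow> real) \<Rightarrow> bool" where
  "superadditive_on I \<phi> \<longleftrightarrow>
     (\<forall>x \<in> PiE I (\<lambda>_. UNIV). \<forall>y \<in> PiE I (\<lambda>_. UNIV).
        \<phi> (\<lambda>i\<in>I. max (x i) (y i)) + \<phi> (\<lambda>i\<in>I. min (x i) (y i)) \<ge> \<phi> x + \<phi> y)"

text \<open>Negative superadditive dependence of the random vector (X i)_{i in I} on M:
  the independent copy (X_i^*) has joint law PiM I (distr M borel (X i)).\<close>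

definition NSD :: "'a measure \<Rightarrow> nat set \<Rightarrow> (nat \<Rightarrow> 'a \<Rightarrow> real) \<Rightarrow> bool" where
  "NSD M I X \<longleftrightarrow>
     (\<forall>\<phi>. superadditive_on I \<phi>
        \<and> integrable M (\<lambda>\<omega>. \<phi> (\<lambda>i\<in>I. X i \<omega>))
        \<and> integrable (PiM I (\<lambda>i. distr M borel (X i))) \<phi>
       \<longrightarrow> (\<integral>\<omega>. \<phi> (\<lambda>i\<in>I. X i \<omega>) \<partial>M) \<le> (\<integral>x. \<phi> x \<partial>(PiM I (\<lambda>i. distr M borel (X i)))))"

end

theory Submission
  imports Defs "HOL-Real_Asymp.Real_Asymp"
begin

(* Truncate each t_j at level 1/L, where L = N^b and b = r/(2(2+r)). Truncation is monotone, so
   x |-> exp (l * sum_j h (x_j)) is superadditive for monotone h, and negative superadditive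
   dependence bounds the exponential moment of the truncated row sum by the product of the
   individual ones. A second-order expansion of exp together with the (2+r)-th moment bound gives
   E exp (s L min (t_j, 1/L)) <= exp ((s L + 2C + 1) / N) for |s| <= 1, so by Chernoff's bound the
   truncated sum deviates from 1 by at least eps with probability at most 2 exp (2C + 1 - eps L).
   By Markov's inequality some t_j exceeds 1/L with probability at most C N^-(1+r/2). Both bounds
   are summable in N, and Borel-Cantelli gives almost sure convergence. *)

lemma exp_le_one_add_self_add_square:
  fixes x :: real
  assumes "\<bar>x\<bar> \<le> 1"
  shows "exp x \<le> 1 + x + x\<^sup>2"
proof (cases "0 \<le> x")
  case True
  then show ?thesis using exp_bound assms by auto
next
  case False
  define y where "y = - x"
  have y: "0 \<le> y" "y \<le> 1" using False assms by (auto simp: y_def)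
  have "1 \<le> 1 + y\<^sup>2/2 + y^3/2 + y^4/2" using y by simp
  also have "\<dots> = (1 - y + y\<^sup>2) * (1 + y + y\<^sup>2/2)"
    by (simp add: algebra_simps power2_eq_square power3_eq_cube power4_eq_xxxx field_simps)
  also have "\<dots> \<le> (1 - y + y\<^sup>2) * exp y"
    using exp_lower_Taylor_quadratic[of y] y
    by (intro mult_left_mono) (auto simp: power2_eq_square algebra_simps intro: order.trans[of y 1])
  finally have "exp (- y) \<le> 1 - y + y\<^sup>2" by (simp add: exp_minus field_simps)
  then show ?thesis by (simp add: y_def)
qed

lemma add_le_add_of_mult_eq:
  fixes p q u v :: real
  assumes "p \<le> u" "q \<le> u" "0 < u" "u * v = p * q"
  shows "p + q \<le> u + v"
proof -
  have "0 \<le> (u - p) * (u - q)" using assms by auto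
  then have "u * (p + q) \<le> u * (u + v)" using assms(4) by (simp add: algebra_simps)
  then show ?thesis using assms(3) by (simp add: mult_le_cancel_left)
qed

lemma exp_mult_add_exp_mult_le_of_spread:
  fixes l u v a b :: real
  assumes "a + b = u + v" "b \<le> u" "b \<le> v"
  shows "exp (l * u) + exp (l * v) \<le> exp (l * a) + exp (l * b)"
proof -
  have prod: "exp (l * a) * exp (l * b) = exp (l * u) * exp (l * v)"
    by (simp add: exp_add[symmetric] distrib_left[symmetric] assms(1))
  show ?thesis
  proof (cases "0 \<le> l")
    case True
    then have "exp (l * u) \<le> exp (l * a)" "exp (l * v) \<le> exp (l * a)"
      using assms by (auto intro: mult_left_mono)
    then show ?thesis using add_le_add_of_mult_eq[OF _ _ _ prod] by auto
  next
    case False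
    then have "exp (l * u) \<le> exp (l * b)" "exp (l * v) \<le> exp (l * b)"
      using assms by (auto simp: mult_le_cancel_left)
    then show ?thesis
      using add_le_add_of_mult_eq[of "exp (l * u)" "exp (l * b)" "exp (l * v)" "exp (l * a)"] prod
      by (auto simp: mult.commute)
  qed
qed

lemma norm_exp_mult_le:
  fixes l y b :: real
  assumes "\<bar>y\<bar> \<le> b"
  shows "norm (exp (l * y)) \<le> exp (\<bar>l\<bar> * b)"
proof -
  have "l * y \<le> \<bar>l\<bar> * \<bar>y\<bar>" by (metis abs_ge_self abs_mult)
  also have "\<dots> \<le> \<bar>l\<bar> * b" using assms by (intro mult_left_mono) auto
  finally show ?thesis by simp
qed

lemma powr_le_powr_mult_powr_add:
  fixes a t p q :: real
  assumes "0 < t" "1 \<le> a * t" "0 \<le> q"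
  shows "t powr p \<le> a powr q * t powr (p + q)"
proof -
  have "0 < a" using assms by (smt (verit) mult_nonpos_nonneg)
  have "t powr p * 1 \<le> t powr p * (a * t) powr q"
    using assms by (intro mult_left_mono ge_one_powr_ge_zero) auto
  also have "\<dots> = a powr q * t powr (p + q)"
    using \<open>0 < a\<close> assms(1) by (simp add: powr_mult powr_add)
  finally show ?thesis by simp
qed

lemma square_le_inverse_square_add_powr:
  fixes t N r :: real
  assumes "0 < t" "0 < N" "0 \<le> r"
  shows "t\<^sup>2 \<le> 1 / N\<^sup>2 + N powr r * t powr (2 + r)"
proof (cases "t \<le> 1 / N")
  case True
  then have "t\<^sup>2 \<le> (1 / N)\<^sup>2" using assms by (intro power_mono) auto
  then show ?thesis by (simp add: power_divide add_increasing2)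
next
  case False
  then have "1 \<le> N * t" using assms by (simp add: field_simps)
  then have "t powr 2 \<le> N powr r * t powr (2 + r)"
    using assms by (intro powr_le_powr_mult_powr_add) auto
  then show ?thesis using assms by (simp add: powr_numeral add_increasing)
qed

lemma moment_coefficients_le:
  fixes L N C r :: real
  assumes "0 < L" "0 < N" "0 \<le> C" "L\<^sup>2 \<le> N" "L powr (2 + r) \<le> N powr (1 + r)"
  shows "(L * L powr (1 + r) + L\<^sup>2 * N powr r) * (C / N powr (2 + r)) + L\<^sup>2 / N\<^sup>2 \<le> (2 * C + 1) / N"
proof -
  have L_powr: "L * L powr (1 + r) = L powr (2 + r)"
    using assms(1) by (simp add: powr_mult_base)
  have N_powr: "N powr (2 + r) = N * N powr (1 + r)" "N powr (2 + r) = N\<^sup>2 * N powr r"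
    using assms(2) by (simp_all add: powr_mult_base powr_add[of N 2 r])
  have "L powr (2 + r) * (C / N powr (2 + r)) = C * (L powr (2 + r) / N powr (1 + r)) / N"
    unfolding N_powr(1) using assms(2) by (simp add: field_simps)
  also have "\<dots> \<le> C / N"
    using assms by (intro divide_right_mono mult_right_le_one_le) auto
  finally have first: "L powr (2 + r) * (C / N powr (2 + r)) \<le> C / N" .
  have "L\<^sup>2 * N powr r * (C / N powr (2 + r)) = C * (L\<^sup>2 / N) / N"
    using assms(2) by (simp add: N_powr(2) power2_eq_square)
  also have "\<dots> \<le> C / N"
    using assms by (intro divide_right_mono mult_right_le_one_le) auto
  finally have second: "L\<^sup>2 * N powr r * (C / N powr (2 + r)) \<le> C / N" .
  have third: "L\<^sup>2 / N\<^sup>2 \<le> 1 / N"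
    using assms by (simp add: power2_eq_square divide_le_eq)
  show ?thesis
    using first second third
    by (simp add: L_powr distrib_right add_divide_distrib)
qed

lemma summable_exp_sub_mult_powr:
  fixes a e b :: real
  assumes "0 < e" "0 < b"
  shows "summable (\<lambda>N::nat. exp (a - e * real N powr b))"
proof (rule summable_comparison_test_ev)
  show "summable (\<lambda>N::nat. inverse (real N ^ 2))"
    by (rule inverse_power_summable) simp
  have "eventually (\<lambda>N::nat. exp (a - e * real N powr b) \<le> inverse (real N ^ 2)) sequentially"
    using assms by real_asymp
  then show "eventually (\<lambda>N. norm (exp (a - e * real N powr b)) \<le> inverse (real N ^ 2)) sequentially"
    by simp
qed

text \<open>A monotone \<open>h\<close> commutes with \<open>max\<close> and \<open>min\<close>, so the sums of \<open>h\<close> at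
  \<open>x \<squnion> y\<close> and \<open>x \<sqinter> y\<close> have the same total as those at \<open>x\<close> and \<open>y\<close> but are more spread out.\<close>

lemma superadditive_on_exp_sum_mono:
  fixes h :: "real \<Rightarrow> real"
  assumes "mono h"
  shows "superadditive_on I (\<lambda>x. exp (l * (\<Sum>i\<in>I. h (x i))))"
  unfolding superadditive_on_def
proof (intro ballI)
  fix x y :: "nat \<Rightarrow> real"
  have h_max: "h (max a b) = max (h a) (h b)" and h_min: "h (min a b) = min (h a) (h b)" for a b
    using assms by (auto simp: max_def min_def mono_def intro: antisym)
  define u where "u = (\<Sum>i\<in>I. h (x i))"
  define v where "v = (\<Sum>i\<in>I. h (y i))"
  define a where "a = (\<Sum>i\<in>I. max (h (x i)) (h (y i)))"
  define b where "b = (\<Sum>i\<in>I. min (h (x i)) (h (y i)))"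
  have "(\<Sum>i\<in>I. h ((\<lambda>i\<in>I. max (x i) (y i)) i)) = a"
    "(\<Sum>i\<in>I. h ((\<lambda>i\<in>I. min (x i) (y i)) i)) = b"
    unfolding a_def b_def by (auto simp: h_max h_min intro: sum.cong)
  moreover have "a + b = u + v"
    unfolding a_def b_def u_def v_def sum.distrib[symmetric] by (intro sum.cong) auto
  moreover have "b \<le> u" "b \<le> v" unfolding b_def u_def v_def by (auto intro: sum_mono)
  ultimately show "exp (l * u) + exp (l * v)
      \<le> exp (l * (\<Sum>i\<in>I. h ((\<lambda>i\<in>I. max (x i) (y i)) i)))
        + exp (l * (\<Sum>i\<in>I. h ((\<lambda>i\<in>I. min (x i) (y i)) i)))"
    using exp_mult_add_exp_mult_le_of_spread by simp
qed

lemma (in prob_space) NSD_expectation_exp_sum_le_prod: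
  fixes X :: "nat \<Rightarrow> 'a \<Rightarrow> real" and h :: "real \<Rightarrow> real"
  assumes [measurable]: "\<And>i. X i \<in> borel_measurable M" "h \<in> borel_measurable borel"
    and "NSD M I X" "finite I" "mono h" and h_bound: "\<And>s. \<bar>h s\<bar> \<le> a"
  shows "expectation (\<lambda>\<omega>. exp (l * (\<Sum>i\<in>I. h (X i \<omega>))))
           \<le> (\<Prod>i\<in>I. expectation (\<lambda>\<omega>. exp (l * h (X i \<omega>))))"
proof -
  define D where "D = (\<lambda>i. distr M borel (X i))"
  have D: "prob_space (D i)" for i unfolding D_def by (rule prob_space_distr) simp
  interpret PD: product_prob_space D I
    by (intro product_prob_space.intro product_sigma_finite.intro)
       (auto intro: prob_space_imp_sigma_finite D simp: product_prob_space_axioms_def D)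
  define \<phi> where "\<phi> = (\<lambda>x::nat \<Rightarrow> real. exp (l * (\<Sum>i\<in>I. h (x i))))"
  have \<phi>_bound: "norm (\<phi> x) \<le> exp (\<bar>l\<bar> * (card I * a))" for x
    unfolding \<phi>_def
    by (intro norm_exp_mult_le order_trans[OF sum_abs]) (use sum_mono[OF h_bound] in auto)
  have "\<phi> \<in> borel_measurable (PiM I D)" unfolding \<phi>_def D_def by measurable
  then have "integrable (PiM I D) \<phi>"
    by (intro PD.P.integrable_const_bound[where B="exp (\<bar>l\<bar> * (card I * a))"])
       (use \<phi>_bound in auto)
  moreover have "integrable M (\<lambda>\<omega>. \<phi> (\<lambda>i\<in>I. X i \<omega>))"
    by (rule integrable_const_bound[where B="exp (\<bar>l\<bar> * (card I * a))"])
       (use \<phi>_bound in \<open>auto simp: \<phi>_def\<close>)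
  moreover have "superadditive_on I \<phi>"
    unfolding \<phi>_def by (rule superadditive_on_exp_sum_mono) fact
  ultimately have "expectation (\<lambda>\<omega>. \<phi> (\<lambda>i\<in>I. X i \<omega>)) \<le> (\<integral>x. \<phi> x \<partial>PiM I D)"
    using \<open>NSD M I X\<close> unfolding NSD_def D_def by blast
  also have "(\<integral>x. \<phi> x \<partial>PiM I D) = (\<integral>x. (\<Prod>i\<in>I. exp (l * h (x i))) \<partial>PiM I D)"
    unfolding \<phi>_def by (simp add: sum_distrib_left exp_sum \<open>finite I\<close>)
  also have "\<dots> = (\<Prod>i\<in>I. \<integral>s. exp (l * h s) \<partial>D i)"
  proof (rule PD.product_integral_prod[OF \<open>finite I\<close>])
    fix i
    show "integrable (D i) (\<lambda>s. exp (l * h s))"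
      using norm_exp_mult_le[OF h_bound] prob_space.finite_measure[OF D]
      by (intro finite_measure.integrable_const_bound[where B="exp (\<bar>l\<bar> * a)"])
         (auto simp: D_def)
  qed
  also have "\<dots> = (\<Prod>i\<in>I. expectation (\<lambda>\<omega>. exp (l * h (X i \<omega>))))"
    unfolding D_def by (intro prod.cong refl integral_distr) auto
  finally show ?thesis
    unfolding \<phi>_def by (simp cong: sum.cong)
qed

definition clamp :: "real \<Rightarrow> real \<Rightarrow> real" where
  "clamp a s = max 0 (min s a)"

lemma mono_clamp: "mono (clamp a)"
  unfolding clamp_def mono_def by auto

lemma clamp_measurable [measurable]: "clamp a \<in> borel_measurable borel"
  unfolding clamp_def by measurable

lemma abs_clamp_le: "0 \<le> a \<Longrightarrow> \<bar>clamp a s\<bar> \<le> a"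
  unfolding clamp_def by auto

lemma diff_clamp_le_powr:
  fixes t L r :: real
  assumes "0 < t" "0 < L" "0 \<le> r"
  shows "t - clamp (1 / L) t \<le> L powr (1 + r) * t powr (2 + r)"
proof (cases "t \<le> 1 / L")
  case True
  then show ?thesis using assms by (simp add: clamp_def)
next
  case False
  then have "1 \<le> L * t" using assms by (simp add: field_simps)
  then have "t powr 1 \<le> L powr (1 + r) * t powr (1 + (1 + r))"
    using assms by (intro powr_le_powr_mult_powr_add) auto
  moreover have "0 \<le> clamp (1 / L) t" by (simp add: clamp_def)
  ultimately show ?thesis using assms by (simp add: add.assoc[symmetric])
qed

lemma exp_mult_clamp_le:
  fixes s L N r t :: real
  assumes "0 < t" "0 < L" "0 < N" "0 \<le> r" "\<bar>s\<bar> \<le> 1"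
  shows "exp (s * L * clamp (1 / L) t)
           \<le> 1 + s * L * t + (L * L powr (1 + r) + L\<^sup>2 * N powr r) * t powr (2 + r) + L\<^sup>2 / N\<^sup>2"
proof -
  define y where "y = clamp (1 / L) t"
  have "0 \<le> y" "y \<le> t" "y \<le> 1 / L"
    using assms by (auto simp: y_def clamp_def)
  then have y: "0 \<le> y" "y \<le> t" "L * y \<le> 1"
    using assms by (auto simp: field_simps)
  have linear: "s * L * y \<le> s * L * t + L * (t - y)"
  proof -
    have "(s + 1) * (y - t) \<le> 0" using assms y by (intro mult_nonneg_nonpos) auto
    then have "L * (s * (y - t)) \<le> L * (t - y)"
      using assms by (intro mult_left_mono) (auto simp: algebra_simps)
    then show ?thesis by (simp add: algebra_simps)
  qed
  have quadratic: "(s * L * y)\<^sup>2 \<le> L\<^sup>2 * t\<^sup>2"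
  proof -
    have "s\<^sup>2 * y\<^sup>2 \<le> 1 * t\<^sup>2"
      using assms y by (intro mult_mono power_mono) (auto simp: abs_square_le_1)
    then have "L\<^sup>2 * (s\<^sup>2 * y\<^sup>2) \<le> L\<^sup>2 * t\<^sup>2" by (simp add: mult_left_mono)
    then show ?thesis by (simp add: power_mult_distrib ac_simps)
  qed
  have "\<bar>s * L * y\<bar> \<le> 1"
    using assms y by (simp add: abs_mult mult.assoc mult_le_one)
  then have "exp (s * L * y) \<le> 1 + s * L * y + (s * L * y)\<^sup>2"
    by (rule exp_le_one_add_self_add_square)
  also have "\<dots> \<le> 1 + s * L * t + L * (t - y) + L\<^sup>2 * t\<^sup>2"
    using linear quadratic by linarith
  also have "\<dots> \<le> 1 + s * L * t + L * (L powr (1 + r) * t powr (2 + r))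
                    + L\<^sup>2 * (1 / N\<^sup>2 + N powr r * t powr (2 + r))"
    using diff_clamp_le_powr[of t L r] square_le_inverse_square_add_powr[of t N r] assms
    unfolding y_def by (intro add_mono mult_left_mono order.refl) auto
  finally show ?thesis
    unfolding y_def by (simp add: algebra_simps)
qed

lemma integrable_integral_le_of_nn_integral_le:
  fixes f :: "'a \<Rightarrow> real"
  assumes [measurable]: "f \<in> borel_measurable M" and nonneg: "\<And>x. x \<in> space M \<Longrightarrow> 0 \<le> f x"
    and le: "(\<integral>\<^sup>+x. ennreal (f x) \<partial>M) \<le> ennreal c" and "0 \<le> c"
  shows "integrable M f" "integral\<^sup>L M f \<le> c"
proof -
  show "integrable M f"
    using le nonneg by (intro integrableI_nonneg) (auto simp: le_less_trans)
  have "integral\<^sup>L M f = enn2real (\<integral>\<^sup>+x. ennreal (f x) \<partial>M)"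
    using nonneg by (intro integral_eq_nn_integral) auto
  also have "\<dots> \<le> c"
    using le \<open>0 \<le> c\<close> by (metis enn2real_ennreal enn2real_mono ennreal_less_top)
  finally show "integral\<^sup>L M f \<le> c" .
qed

lemma (in prob_space) prob_le_exp_neg_mult_expectation_exp:
  fixes Y :: "'a \<Rightarrow> real"
  assumes [measurable]: "Y \<in> borel_measurable M" and "integrable M (\<lambda>\<omega>. exp (Y \<omega>))"
  shows "prob {\<omega> \<in> space M. c \<le> Y \<omega>} \<le> exp (- c) * expectation (\<lambda>\<omega>. exp (Y \<omega>))"
proof -
  have "prob {\<omega> \<in> space M. c \<le> Y \<omega>} = prob {\<omega> \<in> space M. exp c \<le> exp (Y \<omega>)}"
    by simp
  also have "\<dots> \<le> expectation (\<lambda>\<omega>. exp (Y \<omega>)) / exp c"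
    using assms by (intro integral_Markov_inequality_measure[where A="space M"]) auto
  finally show ?thesis by (simp add: exp_minus divide_inverse mult.commute)
qed

lemma (in prob_space) prob_gt_inverse_le_powr_mult_expectation:
  fixes T :: "'a \<Rightarrow> real" and L p :: real
  assumes [measurable]: "T \<in> borel_measurable M" and "\<And>\<omega>. \<omega> \<in> space M \<Longrightarrow> 0 \<le> T \<omega>"
    and "integrable M (\<lambda>\<omega>. T \<omega> powr p)" and "0 < L" "0 < p"
  shows "prob {\<omega> \<in> space M. 1 / L < T \<omega>} \<le> L powr p * expectation (\<lambda>\<omega>. T \<omega> powr p)"
proof -
  have "prob {\<omega> \<in> space M. 1 / L < T \<omega>} \<le> prob {\<omega> \<in> space M. (1 / L) powr p \<le> T \<omega> powr p}"
    using assms by (intro finite_measure_mono) (auto intro: powr_mono2)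
  also have "\<dots> \<le> expectation (\<lambda>\<omega>. T \<omega> powr p) / (1 / L) powr p"
    using assms by (intro integral_Markov_inequality_measure[where A="space M"]) auto
  finally show ?thesis using assms by (simp add: powr_divide mult.commute)
qed

lemma (in prob_space) AE_LIMSEQ_of_summable_prob_deviation:
  fixes Y :: "nat \<Rightarrow> 'a \<Rightarrow> real"
  assumes [measurable]: "\<And>N. Y N \<in> borel_measurable M"
    and summable: "\<And>\<epsilon>. 0 < \<epsilon> \<Longrightarrow> summable (\<lambda>N. prob {\<omega> \<in> space M. \<epsilon> < \<bar>Y N \<omega> - c\<bar>})"
  shows "AE \<omega> in M. (\<lambda>N. Y N \<omega>) \<longlonglongrightarrow> c"
proof -
  have "AE \<omega> in M. eventually (\<lambda>N. \<bar>Y N \<omega> - c\<bar> \<le> 1 / Suc k) sequentially" for k :: nat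
  proof -
    have "AE \<omega> in M. eventually
        (\<lambda>N. \<omega> \<in> space M - {\<omega> \<in> space M. 1 / Suc k < \<bar>Y N \<omega> - c\<bar>}) sequentially"
      using summable[of "1 / Suc k"] by (intro borel_cantelli_AE1) (auto simp: emeasure_eq_measure)
    then show ?thesis by (auto elim!: eventually_mono)
  qed
  then have "AE \<omega> in M. \<forall>k::nat. eventually (\<lambda>N. \<bar>Y N \<omega> - c\<bar> \<le> 1 / Suc k) sequentially"
    by (simp add: AE_all_countable)
  then show ?thesis
  proof (rule AE_mp, intro AE_I2 impI)
    fix \<omega> assume close: "\<forall>k::nat. eventually (\<lambda>N. \<bar>Y N \<omega> - c\<bar> \<le> 1 / Suc k) sequentially"
    show "(\<lambda>N. Y N \<omega>) \<longlonglongrightarrow> c"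
      unfolding tendsto_iff dist_real_def
    proof (intro allI impI)
      fix e :: real assume "0 < e"
      then obtain k :: nat where "1 / Suc k < e" by (rule nat_approx_posE)
      with close[rule_format, of k] show "eventually (\<lambda>N. \<bar>Y N \<omega> - c\<bar> < e) sequentially"
        by (auto elim: eventually_mono)
    qed
  qed
qed

lemma (in prob_space) expectation_exp_mult_clamp_le:
  fixes T :: "'a \<Rightarrow> real" and N L C r s :: real
  assumes [measurable]: "T \<in> borel_measurable M" and T_pos: "\<And>\<omega>. \<omega> \<in> space M \<Longrightarrow> 0 < T \<omega>"
    and "integrable M T" "expectation T = 1 / N"
    and "integrable M (\<lambda>\<omega>. T \<omega> powr (2 + r))"
    and moment: "expectation (\<lambda>\<omega>. T \<omega> powr (2 + r)) \<le> C / N powr (2 + r)"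
    and "0 < N" "0 \<le> r" "0 \<le> C" "0 < L" "L\<^sup>2 \<le> N" "L powr (2 + r) \<le> N powr (1 + r)"
    and "\<bar>s\<bar> \<le> 1"
  shows "expectation (\<lambda>\<omega>. exp (s * L * clamp (1 / L) (T \<omega>))) \<le> exp ((s * L + 2 * C + 1) / N)"
proof -
  define K where "K = L * L powr (1 + r) + L\<^sup>2 * N powr r"
  have "0 \<le> K" using assms by (simp add: K_def)
  have "norm (exp (s * L * clamp (1 / L) x)) \<le> exp (\<bar>s * L\<bar> * (1 / L))" for x
    using assms by (intro norm_exp_mult_le abs_clamp_le) auto
  then have "integrable M (\<lambda>\<omega>. exp (s * L * clamp (1 / L) (T \<omega>)))"
    by (intro integrable_const_bound[where B="exp (\<bar>s * L\<bar> * (1 / L))"]) auto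
  then have "expectation (\<lambda>\<omega>. exp (s * L * clamp (1 / L) (T \<omega>)))
      \<le> expectation (\<lambda>\<omega>. 1 + s * L * T \<omega> + K * T \<omega> powr (2 + r) + L\<^sup>2 / N\<^sup>2)"
    using assms exp_mult_clamp_le[of "T _" L N r s]
    by (intro integral_mono) (auto simp: K_def)
  also have "\<dots> = 1 + s * L / N + K * expectation (\<lambda>\<omega>. T \<omega> powr (2 + r)) + L\<^sup>2 / N\<^sup>2"
    using assms by (simp add: prob_space)
  also have "\<dots> \<le> 1 + s * L / N + (K * (C / N powr (2 + r)) + L\<^sup>2 / N\<^sup>2)"
    using mult_left_mono[OF moment \<open>0 \<le> K\<close>] by simp
  also have "\<dots> \<le> 1 + (s * L + 2 * C + 1) / N"
    using moment_coefficients_le[of L N C r] assms unfolding K_def by (simp add: add_divide_distrib)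
  also have "\<dots> \<le> exp ((s * L + 2 * C + 1) / N)"
    by (metis add.commute exp_ge_add_one_self)
  finally show ?thesis .
qed

locale NSD_row = prob_space +
  fixes X :: "nat \<Rightarrow> 'a \<Rightarrow> real" and N :: nat and r C :: real
  assumes measurable_X [measurable]: "\<And>i. X i \<in> borel_measurable M"
    and X_pos: "\<And>i \<omega>. i \<in> {1..N} \<Longrightarrow> \<omega> \<in> space M \<Longrightarrow> 0 < X i \<omega>"
    and integrable_X: "\<And>i. i \<in> {1..N} \<Longrightarrow> integrable M (X i)"
    and expectation_X: "\<And>i. i \<in> {1..N} \<Longrightarrow> expectation (X i) = 1 / N"
    and integrable_X_powr: "\<And>i. i \<in> {1..N} \<Longrightarrow> integrable M (\<lambda>\<omega>. X i \<omega> powr (2 + r))"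
    and moment_X: "\<And>i. i \<in> {1..N} \<Longrightarrow> expectation (\<lambda>\<omega>. X i \<omega> powr (2 + r)) \<le> C / N powr (2 + r)"
    and NSD_X: "NSD M {1..N} X"
    and one_le_N: "1 \<le> N" and r_pos: "0 < r" and C_nonneg: "0 \<le> C"
begin

lemma expectation_exp_clamp_sum_le:
  fixes L s :: real
  assumes "0 < L" "L\<^sup>2 \<le> N" "L powr (2 + r) \<le> N powr (1 + r)" "\<bar>s\<bar> \<le> 1"
  shows "expectation (\<lambda>\<omega>. exp (s * L * (\<Sum>i=1..N. clamp (1 / L) (X i \<omega>))))
           \<le> exp (s * L + 2 * C + 1)"
proof -
  have "expectation (\<lambda>\<omega>. exp (s * L * (\<Sum>i=1..N. clamp (1 / L) (X i \<omega>))))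
      \<le> (\<Prod>i=1..N. expectation (\<lambda>\<omega>. exp (s * L * clamp (1 / L) (X i \<omega>))))"
    using assms
    by (intro NSD_expectation_exp_sum_le_prod[OF measurable_X clamp_measurable NSD_X])
       (auto intro: mono_clamp abs_clamp_le)
  also have "\<dots> \<le> (\<Prod>i=1..N. exp ((s * L + 2 * C + 1) / N))"
    using assms one_le_N r_pos C_nonneg X_pos integrable_X expectation_X integrable_X_powr moment_X
    by (intro prod_mono conjI integral_nonneg expectation_exp_mult_clamp_le) auto
  also have "\<dots> = exp (s * L + 2 * C + 1)"
    using one_le_N by (simp add: exp_of_nat_mult[symmetric])
  finally show ?thesis .
qed

lemma prob_clamp_sum_deviation_le:
  fixes L s \<epsilon> :: real
  assumes "0 < L" "L\<^sup>2 \<le> N" "L powr (2 + r) \<le> N powr (1 + r)" "\<bar>s\<bar> \<le> 1"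
  shows "prob {\<omega> \<in> space M. \<epsilon> \<le> s * ((\<Sum>i=1..N. clamp (1 / L) (X i \<omega>)) - 1)}
           \<le> exp (2 * C + 1 - \<epsilon> * L)"
proof -
  define S where "S \<omega> = (\<Sum>i=1..N. clamp (1 / L) (X i \<omega>))" for \<omega>
  have "\<bar>S \<omega>\<bar> \<le> N * (1 / L)" for \<omega>
  proof -
    have "\<bar>S \<omega>\<bar> \<le> (\<Sum>i=1..N. \<bar>clamp (1 / L) (X i \<omega>)\<bar>)" unfolding S_def by (rule sum_abs)
    also have "\<dots> \<le> (\<Sum>i=1..N. 1 / L)" using assms by (intro sum_mono abs_clamp_le) auto
    finally show ?thesis by simp
  qed
  then have S_bound: "norm (exp (s * L * S \<omega>)) \<le> exp (\<bar>s * L\<bar> * (N * (1 / L)))" for \<omega>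
    by (rule norm_exp_mult_le)
  have "\<epsilon> \<le> s * (S \<omega> - 1) \<longleftrightarrow> L * \<epsilon> \<le> L * (s * (S \<omega> - 1))" for \<omega>
    using assms(1) by simp
  moreover have "L * (s * (S \<omega> - 1)) = s * L * S \<omega> - s * L" for \<omega>
    by (simp add: algebra_simps)
  ultimately have "{\<omega> \<in> space M. \<epsilon> \<le> s * (S \<omega> - 1)} = {\<omega> \<in> space M. \<epsilon> * L + s * L \<le> s * L * S \<omega>}"
    by (auto simp: mult.commute)
  then have "prob {\<omega> \<in> space M. \<epsilon> \<le> s * (S \<omega> - 1)}
      = prob {\<omega> \<in> space M. \<epsilon> * L + s * L \<le> s * L * S \<omega>}"
    by simp
  also have "\<dots> \<le> exp (- (\<epsilon> * L + s * L)) * expectation (\<lambda>\<omega>. exp (s * L * S \<omega>))"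
  proof (rule prob_le_exp_neg_mult_expectation_exp[of "\<lambda>\<omega>. s * L * S \<omega>"])
    show "(\<lambda>\<omega>. s * L * S \<omega>) \<in> borel_measurable M"
      unfolding S_def by measurable
    then show "integrable M (\<lambda>\<omega>. exp (s * L * S \<omega>))"
      using S_bound by (intro integrable_const_bound[where B="exp (\<bar>s * L\<bar> * (N * (1 / L)))"]) auto
  qed
  also have "\<dots> \<le> exp (- (\<epsilon> * L + s * L)) * exp (s * L + 2 * C + 1)"
    using expectation_exp_clamp_sum_le[OF assms] unfolding S_def by simp
  also have "\<dots> = exp (2 * C + 1 - \<epsilon> * L)"
    by (simp add: exp_add[symmetric])
  finally show ?thesis unfolding S_def .
qed

lemma sum_clamp_eq_sum:
  assumes "\<omega> \<in> space M" "\<And>i. i \<in> {1..N} \<Longrightarrow> X i \<omega> \<le> 1 / L"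
  shows "(\<Sum>i=1..N. clamp (1 / L) (X i \<omega>)) = (\<Sum>i=1..N. X i \<omega>)"
  using assms X_pos by (intro sum.cong) (auto simp: clamp_def less_imp_le)

lemma prob_sum_deviation_le:
  fixes L \<epsilon> :: real
  assumes "0 < L" "L\<^sup>2 \<le> N" "L powr (2 + r) \<le> N powr (1 + r)"
  shows "prob {\<omega> \<in> space M. \<epsilon> < \<bar>(\<Sum>i=1..N. X i \<omega>) - 1\<bar>}
           \<le> N * (L powr (2 + r) * (C / N powr (2 + r))) + 2 * exp (2 * C + 1 - \<epsilon> * L)"
proof -
  define S where "S \<omega> = (\<Sum>i=1..N. clamp (1 / L) (X i \<omega>))" for \<omega>
  define big where "big i = {\<omega> \<in> space M. 1 / L < X i \<omega>}" for i
  define up where "up = {\<omega> \<in> space M. \<epsilon> \<le> 1 * (S \<omega> - 1)}"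
  define down where "down = {\<omega> \<in> space M. \<epsilon> \<le> - 1 * (S \<omega> - 1)}"
  have [measurable]: "big i \<in> sets M" "up \<in> sets M" "down \<in> sets M" for i
    unfolding big_def up_def down_def S_def by measurable
  have "{\<omega> \<in> space M. \<epsilon> < \<bar>(\<Sum>i=1..N. X i \<omega>) - 1\<bar>} \<subseteq> (\<Union>i\<in>{1..N}. big i) \<union> up \<union> down"
  proof (intro subsetI)
    fix \<omega> assume \<omega>: "\<omega> \<in> {\<omega> \<in> space M. \<epsilon> < \<bar>(\<Sum>i=1..N. X i \<omega>) - 1\<bar>}"
    show "\<omega> \<in> (\<Union>i\<in>{1..N}. big i) \<union> up \<union> down"
    proof (cases "\<omega> \<in> (\<Union>i\<in>{1..N}. big i)")
      case False
      then have "S \<omega> = (\<Sum>i=1..N. X i \<omega>)"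
        using \<omega> unfolding S_def big_def by (intro sum_clamp_eq_sum) (auto simp: not_less)
      then show ?thesis using \<omega> by (auto simp: up_def down_def)
    qed auto
  qed
  then have "prob {\<omega> \<in> space M. \<epsilon> < \<bar>(\<Sum>i=1..N. X i \<omega>) - 1\<bar>}
      \<le> prob ((\<Union>i\<in>{1..N}. big i) \<union> up \<union> down)"
    by (intro finite_measure_mono) auto
  moreover have "prob ((\<Union>i\<in>{1..N}. big i) \<union> up \<union> down)
      \<le> prob (\<Union>i\<in>{1..N}. big i) + prob up + prob down"
    using measure_Un_le[of "\<Union>i\<in>{1..N}. big i" M up]
      measure_Un_le[of "(\<Union>i\<in>{1..N}. big i) \<union> up" M down]
    by auto
  moreover have "prob (\<Union>i\<in>{1..N}. big i) \<le> (\<Sum>i=1..N. L powr (2 + r) * (C / N powr (2 + r)))"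
  proof (rule order.trans[OF finite_measure_subadditive_finite sum_mono])
    fix i assume i: "i \<in> {1..N}"
    have "prob (big i) \<le> L powr (2 + r) * expectation (\<lambda>\<omega>. X i \<omega> powr (2 + r))"
      unfolding big_def using assms r_pos X_pos[OF i] integrable_X_powr[OF i]
      by (intro prob_gt_inverse_le_powr_mult_expectation) (auto intro: less_imp_le)
    also have "\<dots> \<le> L powr (2 + r) * (C / N powr (2 + r))"
      using moment_X[OF i] by (intro mult_left_mono) auto
    finally show "prob (big i) \<le> L powr (2 + r) * (C / N powr (2 + r))" .
  qed auto
  moreover have "prob up \<le> exp (2 * C + 1 - \<epsilon> * L)" "prob down \<le> exp (2 * C + 1 - \<epsilon> * L)"
    unfolding up_def down_def S_def using assms by (intro prob_clamp_sum_deviation_le; simp)+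
  ultimately show ?thesis by simp
qed

text \<open>The exponent \<open>r / (2 * (2 + r))\<close> makes \<open>L\<^sup>2 \<le> N\<close> and turns the truncation term into
  \<open>C * N powr - (1 + r / 2)\<close>, which is summable, while \<open>exp (- \<epsilon> * L)\<close> still decays.\<close>

lemma prob_sum_deviation_le_powr:
  fixes \<epsilon> :: real
  shows "prob {\<omega> \<in> space M. \<epsilon> < \<bar>(\<Sum>i=1..N. X i \<omega>) - 1\<bar>}
           \<le> C * N powr - (1 + r / 2) + 2 * exp (2 * C + 1 - \<epsilon> * N powr (r / (2 * (2 + r))))"
proof -
  define L where "L = real N powr (r / (2 * (2 + r)))"
  have N: "1 \<le> real N" using one_le_N by simp
  have "L\<^sup>2 = N powr (2 * (r / (2 * (2 + r))))"
    unfolding L_def using N by (subst powr_power) auto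
  also have "\<dots> = N powr (r / (2 + r))"
    by (rule arg_cong[where f="\<lambda>e. real N powr e"]) (use r_pos in \<open>simp add: field_simps\<close>)
  also have "\<dots> \<le> N powr 1"
    using N r_pos by (intro powr_mono) auto
  finally have L_square: "L\<^sup>2 \<le> N" using N by simp
  have L_powr: "L powr (2 + r) = N powr (r / 2)"
    unfolding L_def powr_powr
    by (rule arg_cong[where f="\<lambda>e. real N powr e"]) (use r_pos in \<open>simp add: field_simps\<close>)
  have "L powr (2 + r) \<le> N powr (1 + r)"
    unfolding L_powr using N r_pos by (intro powr_mono) auto
  then have "prob {\<omega> \<in> space M. \<epsilon> < \<bar>(\<Sum>i=1..N. X i \<omega>) - 1\<bar>}
      \<le> N * (L powr (2 + r) * (C / N powr (2 + r))) + 2 * exp (2 * C + 1 - \<epsilon> * L)"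
    using N L_square by (intro prob_sum_deviation_le) (auto simp: L_def)
  also have "N * (L powr (2 + r) * (C / N powr (2 + r))) = C * N powr - (1 + r / 2)"
  proof -
    have "N powr - (1 + r / 2) = N powr (1 + r / 2 - (2 + r))" by simp
    also have "\<dots> = N * N powr (r / 2) / N powr (2 + r)"
      using N by (simp only: powr_diff powr_add powr_one)
    finally show ?thesis by (simp add: L_powr)
  qed
  finally show ?thesis by (simp add: L_def)
qed

end

lemma NSD_row_of_nn_integral:
  fixes X :: "nat \<Rightarrow> 'a \<Rightarrow> real" and N :: nat and r C :: real
  assumes "prob_space M" and [measurable]: "\<And>i. X i \<in> borel_measurable M"
    and pos: "\<And>i \<omega>. i \<in> {1..N} \<Longrightarrow> \<omega> \<in> space M \<Longrightarrow> 0 < X i \<omega>"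
    and mean: "\<And>i. i \<in> {1..N} \<Longrightarrow> (\<integral>\<^sup>+\<omega>. ennreal (X i \<omega>) \<partial>M) = ennreal (1 / N)"
    and moment: "\<And>i. i \<in> {1..N} \<Longrightarrow>
      (\<integral>\<^sup>+\<omega>. ennreal (X i \<omega> powr (2 + r)) \<partial>M) \<le> ennreal (C / N powr (2 + r))"
    and "NSD M {1..N} X" "1 \<le> N" "0 < r" "0 \<le> C"
  shows "NSD_row M X N r C"
proof (intro NSD_row.intro NSD_row_axioms.intro)
  fix i assume i: "i \<in> {1..N}"
  show "integrable M (X i)" "integral\<^sup>L M (X i) = 1 / N"
    using integrable_integral_le_of_nn_integral_le(1)[of "X i" M "1 / N"]
      integral_eq_nn_integral[of "X i" M] mean[OF i] pos[OF i]
    by (auto simp: less_imp_le)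
  show "integrable M (\<lambda>\<omega>. X i \<omega> powr (2 + r))"
    "integral\<^sup>L M (\<lambda>\<omega>. X i \<omega> powr (2 + r)) \<le> C / N powr (2 + r)"
    using integrable_integral_le_of_nn_integral_le[of "\<lambda>\<omega>. X i \<omega> powr (2 + r)" M]
      moment[OF i] \<open>0 \<le> C\<close> by auto
qed (use assms in auto)

theorem lemma4p3:
  fixes M :: "'a measure" and t :: "nat \<Rightarrow> nat \<Rightarrow> 'a \<Rightarrow> real" and r C :: real
  assumes "prob_space M"
    and "\<And>N j. t N j \<in> borel_measurable M"
    and "\<And>N j \<omega>. \<omega> \<in> space M \<Longrightarrow> t N j \<omega> > 0"
    and "\<And>N i. N \<ge> 1 \<Longrightarrow> i \<ge> 1 \<Longrightarrow>
           (\<integral>\<^sup>+ \<omega>. ennreal (t N i \<omega>) \<partial>M) = ennreal (1 / real N)"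
    and "r > 0" and "C > 0"
    and "\<And>N i. N \<ge> 1 \<Longrightarrow> i \<ge> 1 \<Longrightarrow>
           (\<integral>\<^sup>+ \<omega>. ennreal (t N i \<omega> powr (2 + r)) \<partial>M) \<le> ennreal (C / real N powr (2 + r))"
    and "\<And>N m. N \<ge> 1 \<Longrightarrow> m \<ge> 1 \<Longrightarrow> NSD M {1..m} (t N)"
  shows "AE \<omega> in M. (\<lambda>N. \<Sum>j=1..N. t N j \<omega>) \<longlonglongrightarrow> 1"
proof -
  note [measurable] = assms(2)
  interpret prob_space M by fact
  have row: "NSD_row M (t N) N r C" if "1 \<le> N" for N
    using assms that by (intro NSD_row_of_nn_integral) auto
  show ?thesis
  proof (rule AE_LIMSEQ_of_summable_prob_deviation)
    fix \<epsilon> :: real assume "0 < \<epsilon>"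
    have "summable (\<lambda>N::nat. C * N powr - (1 + r / 2)
                      + 2 * exp (2 * C + 1 - \<epsilon> * N powr (r / (2 * (2 + r)))))"
      using \<open>0 < r\<close> \<open>0 < \<epsilon>\<close>
      by (intro summable_add summable_mult summable_exp_sub_mult_powr)
         (auto simp: summable_real_powr_iff)
    then show "summable (\<lambda>N. prob {\<omega> \<in> space M. \<epsilon> < \<bar>(\<Sum>j=1..N. t N j \<omega>) - 1\<bar>})"
      using NSD_row.prob_sum_deviation_le_powr[OF row]
      by (elim summable_comparison_test_ev[rotated]) (auto simp: eventually_sequentially)
  qed measurable
qed

end
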